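(* Let $B,U\ge 1$, $\mathbf{H}\in\mathbb{C}^{B\times U}$, $\mathbf{j}\in\mathbb{C}^B$, and let $\mathbf{y}=\mathbf{H}\mathbf{s}+\mathbf{j}w+\mathbf{n}\in\mathbb{C}^B$, where $\mathbf{s}\in\mathbb{C}^U$ has independent zero-mean entries with $\mathbb{E}[\mathbf{s}\mathbf{s}^H]=E_s\mathbf{I}_U$, $w$ is circularly-symmetric complex Gaussian with variance $E_J$, $\mathbf{n}$ is i.i.d. circularly-symmetric complex Gaussian with per-entry variance $N_0$, and $\mathbf{s},w,\mathbf{n}$ are mutually independent. Set $\mathbf{C}_{\mathbf{y}}=E_s\mathbf{H}\mathbf{H}^H+E_J\mathbf{j}\mathbf{j}^H+N_0\mathbf{I}_B$. Consider the unconstrained optimization problem $$\min_{\beta\in\mathbb{C},\,\mathbf{b}\in\mathbb{C}^B,\,\mathbf{a}\in\mathbb{C}^B}\ \mathbb{E}_{\mathbf{s},w,\mathbf{n}}\big[\|\beta\mathbf{b}\mathbf{a}^H\mathbf{y}-\mathbf{j}w\|^2\big].$$ Then a solution is $$\hat{\mathbf{b}}_{\mathbb{C}}=\mathbf{j},\qquad \hat{\mathbf{a}}_{\mathbb{C}}=E_J\mathbf{C}_{\mathbf{y}}^{-1}\mathbf{j},\qquad \hat\beta_{\mathbb{C}}=1,$$ and the corresponding transform $\hat{\mathbf{P}}_{\mathbb{C}}=\mathbf{I}_B-\hat\beta_{\mathbb{C}}\hat{\mathbf{b}}_{\mathbb{C}}\hat{\mathbf{a}}_{\mathbb{C}}^H$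 equals $$\hat{\mathbf{P}}_{\mathbb{C}}=\mathbf{I}_B-E_J\mathbf{j}\mathbf{j}^H\mathbf{C}_{\mathbf{y}}^{-1}.$$
   Context: $\mathbf{C}_{\mathbf{y}}$ is the covariance matrix of $\mathbf{y}$ (positive definite when $N_0>0$). The problem is the optimal choice of an analog transform $\mathbf{P}=\mathbf{I}_B-\beta\mathbf{b}\mathbf{a}^H$ minimizing $\mathbb{E}\|\mathbf{P}\mathbf{y}-(\mathbf{H}\mathbf{s}+\mathbf{n})\|^2$, with no alphabet constraints on $\mathbf{a},\mathbf{b}$. $(\cdot)^H$ is the conjugate transpose and $\|\cdot\|$ the Euclidean norm. *)

theory Defs
  imports "HOL-Analysis.Analysis" "HOL-Probability.Probability"
begin

definition cadj :: "complex^'n^'m \<Rightarrow> complex^'m^'n" where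
  "cadj A = (\<chi> i j. cnj (A $ j $ i))"

definition couter :: "complex^'m \<Rightarrow> complex^'n \<Rightarrow> complex^'n^'m" where
  "couter b a = (\<chi> i j. b $ i * cnj (a $ j))"

definition cscale :: "complex \<Rightarrow> complex^'n^'m \<Rightarrow> complex^'n^'m" where
  "cscale c A = (\<chi> i j. c * A $ i $ j)"

definition cov_y :: "real \<Rightarrow> real \<Rightarrow> real \<Rightarrow> complex^'u^'b \<Rightarrow> complex^'b \<Rightarrow> complex^'b^'b" where
  "cov_y Es EJ N0 H j =
     cscale (complex_of_real Es) (H ** cadj H) + cscale (complex_of_real EJ) (couter j j)
     + cscale (complex_of_real N0) (mat 1)"

(* circularly-symmetric complex Gaussian with variance v:
   real and imaginary parts independent N(0, v/2); degenerate (= 0 a.s.) when v = 0 *)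
definition circ_gaussian :: "'a measure \<Rightarrow> ('a \<Rightarrow> complex) \<Rightarrow> real \<Rightarrow> bool" where
  "circ_gaussian M X v \<longleftrightarrow>
     X \<in> borel_measurable M \<and>
     (if v = 0 then (AE x in M. X x = 0)
      else distributed M lborel (\<lambda>x. Re (X x)) (\<lambda>t. ennreal (normal_density 0 (sqrt (v/2)) t))
         \<and> distributed M lborel (\<lambda>x. Im (X x)) (\<lambda>t. ennreal (normal_density 0 (sqrt (v/2)) t))
         \<and> prob_space.indep_var M borel (\<lambda>x. Re (X x)) borel (\<lambda>x. Im (X x)))"

(* all scalar random entries (s_1..s_U, w, n_1..n_B) collected in one family *)
definition all_entries ::
  "('a \<Rightarrow> complex^'u) \<Rightarrow> ('a \<Rightarrow> complex) \<Rightarrow> ('a \<Rightarrow> complex^'b) \<Rightarrow> ('u + unit) + 'b \<Rightarrow> 'a \<Rightarrow> complex" where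
  "all_entries s w n idx x =
     (case idx of Inl (Inl i) \<Rightarrow> s x $ i | Inl (Inr _) \<Rightarrow> w x | Inr k \<Rightarrow> n x $ k)"

definition objective ::
  "'a measure \<Rightarrow> complex^'u^'b \<Rightarrow> complex^'b \<Rightarrow> ('a \<Rightarrow> complex^'u) \<Rightarrow> ('a \<Rightarrow> complex)
   \<Rightarrow> ('a \<Rightarrow> complex^'b) \<Rightarrow> complex \<Rightarrow> complex^'b \<Rightarrow> complex^'b \<Rightarrow> real" where
  "objective M H j s w n \<beta> b a =
     integral\<^sup>L M (\<lambda>x. (norm (cscale \<beta> (couter b a) *v (H *v s x + w x *s j + n x) - w x *s j))\<^sup>2)"

end

theory Submission
  imports Defs
begin

text \<open>Stack all scalar sources into \<open>z = (s, w, n)\<close>. Independence and zero means make \<open>z\<close>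
  uncorrelated with variances \<open>d = (E\<^sub>s, E\<^sub>J, N\<^sub>0)\<close>, and \<open>y = G z\<close>, \<open>j w = K z\<close> for fixed
  matrices \<open>G\<close>, \<open>K\<close>. Hence for any transform \<open>F\<close> the objective is the weighted Frobenius norm
  \<open>\<Sum>\<^sub>i\<^sub>p d\<^sub>p |(F G - K)\<^sub>i\<^sub>p|\<^sup>2\<close>, a least-squares problem in \<open>F\<close>. Its normal equations
  \<open>F G D G\<^sup>H = K D G\<^sup>H\<close> read \<open>F C\<^sub>y = E\<^sub>J j j\<^sup>H\<close>, since \<open>C\<^sub>y = G D G\<^sup>H\<close>; \<open>C\<^sub>y\<close> is positive definite
  because \<open>G\<close> contains the identity block of the noise. The unconstrained minimiser
  \<open>E\<^sub>J j j\<^sup>H C\<^sub>y\<^sup>-\<^sup>1\<close> is rank one, and as \<open>C\<^sub>y\<close> is Hermitian it equals \<open>j a\<^sup>H\<close> with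
  \<open>a = E\<^sub>J C\<^sub>y\<^sup>-\<^sup>1 j\<close>, so it also minimises over the family \<open>\<beta> b a\<^sup>H\<close>.\<close>

lemma borel_measurable_cnj [measurable]: "cnj \<in> borel_measurable borel"
  by (intro borel_measurable_continuous_onI linear_continuous_on bounded_linear_cnj)

lemma integrable_mult_cnj:
  fixes f g :: "'a \<Rightarrow> complex"
  assumes [measurable]: "f \<in> borel_measurable M" "g \<in> borel_measurable M"
    and "integrable M (\<lambda>x. (cmod (f x))\<^sup>2)" "integrable M (\<lambda>x. (cmod (g x))\<^sup>2)"
  shows "integrable M (\<lambda>x. f x * cnj (g x))"
proof (rule Bochner_Integration.integrable_bound)
  show "integrable M (\<lambda>x. (cmod (f x))\<^sup>2 + (cmod (g x))\<^sup>2)"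
    using assms(3,4) by simp
  show "AE x in M. norm (f x * cnj (g x)) \<le> norm ((cmod (f x))\<^sup>2 + (cmod (g x))\<^sup>2)"
  proof (intro AE_I2)
    fix x
    have "2 * cmod (f x) * cmod (g x) \<le> (cmod (f x))\<^sup>2 + (cmod (g x))\<^sup>2"
      by (rule sum_squares_bound)
    moreover have "0 \<le> cmod (f x) * cmod (g x)" by simp
    ultimately show "norm (f x * cnj (g x)) \<le> norm ((cmod (f x))\<^sup>2 + (cmod (g x))\<^sup>2)"
      unfolding norm_mult complex_mod_cnj real_norm_def by linarith
  qed
qed measurable

lemma integral_mult_cnj_self:
  "integral\<^sup>L M (\<lambda>x. f x * cnj (f x)) = complex_of_real (integral\<^sup>L M (\<lambda>x. (cmod (f x))\<^sup>2))"
  by (simp add: complex_norm_square[symmetric] del: of_real_power)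

lemma (in prob_space) integrable_of_square_integrable_cmod:
  fixes f :: "'a \<Rightarrow> complex"
  assumes [measurable]: "f \<in> borel_measurable M" and "integrable M (\<lambda>x. (cmod (f x))\<^sup>2)"
  shows "integrable M f"
proof -
  have "integrable M (\<lambda>x. cmod (f x))"
    by (rule square_integrable_imp_integrable) (use assms in auto)
  then show ?thesis by (simp add: integrable_norm_iff)
qed

definition diag_correlated :: "'a measure \<Rightarrow> ('i \<Rightarrow> 'a \<Rightarrow> complex) \<Rightarrow> ('i \<Rightarrow> real) \<Rightarrow> bool" where
  "diag_correlated M Z d \<longleftrightarrow>
     (\<forall>p q. integrable M (\<lambda>x. Z p x * cnj (Z q x)) \<and>
            integral\<^sup>L M (\<lambda>x. Z p x * cnj (Z q x)) = (if p = q then complex_of_real (d p) else 0))"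

lemma (in prob_space) indep_vars_diag_correlated:
  fixes Z :: "'i \<Rightarrow> 'a \<Rightarrow> complex"
  assumes indep: "indep_vars (\<lambda>_. borel) Z UNIV"
    and square_int: "\<And>p. integrable M (\<lambda>x. (cmod (Z p x))\<^sup>2)"
    and mean_zero: "\<And>p. integral\<^sup>L M (Z p) = 0"
  shows "diag_correlated M Z (\<lambda>p. integral\<^sup>L M (\<lambda>x. (cmod (Z p x))\<^sup>2))"
  unfolding diag_correlated_def
proof (intro allI conjI)
  fix p q
  have meas: "Z i \<in> borel_measurable M" for i
    using indep by (simp add: indep_vars_def)
  then show "integrable M (\<lambda>x. Z p x * cnj (Z q x))"
    by (intro integrable_mult_cnj square_int)
  show "integral\<^sup>L M (\<lambda>x. Z p x * cnj (Z q x))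
      = (if p = q then complex_of_real (integral\<^sup>L M (\<lambda>x. (cmod (Z p x))\<^sup>2)) else 0)"
  proof (cases "p = q")
    case True
    then show ?thesis by (simp add: integral_mult_cnj_self)
  next
    case False
    define X where "X i x = (if i = q then cnj else id) (Z i x)" for i x
    have "indep_vars (\<lambda>_. borel) X UNIV"
      unfolding X_def by (rule indep_vars_compose2[OF indep]) auto
    then have "indep_vars (\<lambda>_. borel) X {p, q}"
      by (rule indep_vars_subset) auto
    moreover have "integrable M (X i)" for i
      using integrable_of_square_integrable_cmod[OF meas square_int]
      by (simp add: X_def[abs_def])
    ultimately have "integral\<^sup>L M (\<lambda>x. \<Prod>i\<in>{p, q}. X i x) = (\<Prod>i\<in>{p, q}. integral\<^sup>L M (X i))"
      by (intro indep_vars_lebesgue_integral) auto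
    moreover have "X p = Z p"
      using False by (simp add: X_def fun_eq_iff)
    ultimately show ?thesis
      using False mean_zero[of p] by (simp add: X_def)
  qed
qed

lemma (in prob_space) normal_distributed_moments:
  assumes "0 < \<sigma>" and D: "distributed M lborel X (\<lambda>t. ennreal (normal_density 0 \<sigma> t))"
  shows "integrable M X" "integral\<^sup>L M X = 0"
    "integrable M (\<lambda>x. (X x)\<^sup>2)" "integral\<^sup>L M (\<lambda>x. (X x)\<^sup>2) = \<sigma>\<^sup>2"
proof -
  show "integrable M X"
    by (rule distributed_integrable_var[OF D normal_density_nonneg
          integrable_normal_moment_nz_1[OF \<open>0 < \<sigma>\<close>]])
  show mean: "integral\<^sup>L M X = 0"
    using normal_distributed_expectation[OF assms] by simp
  show "integrable M (\<lambda>x. (X x)\<^sup>2)"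
    using distributed_integrable[OF D, of "\<lambda>x. x\<^sup>2"] assms(1)
      integrable_normal_moment[where \<mu>=0 and \<sigma>=\<sigma> and k=2]
    by (simp add: power2_eq_square)
  show "integral\<^sup>L M (\<lambda>x. (X x)\<^sup>2) = \<sigma>\<^sup>2"
    using normal_distributed_variance[OF assms] mean by simp
qed

lemma (in prob_space) circ_gaussian_moments:
  assumes g: "circ_gaussian M X v" and "0 \<le> v"
  shows "integral\<^sup>L M X = 0 \<and> integrable M (\<lambda>x. (cmod (X x))\<^sup>2)
         \<and> integral\<^sup>L M (\<lambda>x. (cmod (X x))\<^sup>2) = v"
proof (cases "v = 0")
  case True
  have [measurable]: "X \<in> borel_measurable M"
    using g by (simp add: circ_gaussian_def)
  have ae: "AE x in M. X x = 0"
    using g True by (simp add: circ_gaussian_def)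
  have "integral\<^sup>L M X = integral\<^sup>L M (\<lambda>_. 0::complex)"
    by (rule integral_cong_AE) (use ae in auto)
  moreover have "integrable M (\<lambda>x. (cmod (X x))\<^sup>2) \<longleftrightarrow> integrable M (\<lambda>_. 0::real)"
    by (rule integrable_cong_AE) (use ae in auto)
  moreover have "integral\<^sup>L M (\<lambda>x. (cmod (X x))\<^sup>2) = integral\<^sup>L M (\<lambda>_. 0::real)"
    by (rule integral_cong_AE) (use ae in auto)
  ultimately show ?thesis using True by simp
next
  case False
  define \<sigma> where "\<sigma> = sqrt (v / 2)"
  have \<sigma>: "0 < \<sigma>" "\<sigma>\<^sup>2 = v / 2"
    using False \<open>0 \<le> v\<close> by (auto simp: \<sigma>_def)
  have "distributed M lborel (\<lambda>x. Re (X x)) (\<lambda>t. ennreal (normal_density 0 \<sigma> t))"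
    and "distributed M lborel (\<lambda>x. Im (X x)) (\<lambda>t. ennreal (normal_density 0 \<sigma> t))"
    using g False by (simp_all add: circ_gaussian_def \<sigma>_def)
  note Re = normal_distributed_moments[OF \<sigma>(1) this(1)]
    and Im = normal_distributed_moments[OF \<sigma>(1) this(2)]
  have X_eq: "X = (\<lambda>x. complex_of_real (Re (X x)) + \<i> * complex_of_real (Im (X x)))"
    by (simp add: fun_eq_iff complex_eq_iff)
  have "integral\<^sup>L M X = 0"
    using Re Im by (subst X_eq) simp
  moreover have "(\<lambda>x. (cmod (X x))\<^sup>2) = (\<lambda>x. (Re (X x))\<^sup>2 + (Im (X x))\<^sup>2)"
    by (simp add: fun_eq_iff cmod_power2)
  ultimately show ?thesis
    using Re Im \<sigma>(2) by simp
qed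

definition entry_variance :: "real \<Rightarrow> real \<Rightarrow> real \<Rightarrow> ('u + unit) + 'b \<Rightarrow> real" where
  "entry_variance Es EJ N0 p = (case p of Inl (Inl _) \<Rightarrow> Es | Inl (Inr _) \<Rightarrow> EJ | Inr _ \<Rightarrow> N0)"

lemma entry_variance_nonneg: "0 \<le> Es \<Longrightarrow> 0 \<le> EJ \<Longrightarrow> 0 \<le> N0 \<Longrightarrow> 0 \<le> entry_variance Es EJ N0 p"
  by (simp add: entry_variance_def split: sum.split)

lemma all_entries_simps [simp]:
  "all_entries s w n (Inl (Inl i)) = (\<lambda>x. s x $ i)"
  "all_entries s w n (Inl (Inr u)) = w"
  "all_entries s w n (Inr k) = (\<lambda>x. n x $ k)"
  by (auto simp: all_entries_def fun_eq_iff)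

lemma (in prob_space) all_entries_diag_correlated:
  fixes s :: "'a \<Rightarrow> complex^'u" and n :: "'a \<Rightarrow> complex^'b"
  assumes "0 \<le> EJ" and "0 < N0"
    and indep: "indep_vars (\<lambda>_. borel) (all_entries s w n) UNIV"
    and s_square_int: "\<And>i. integrable M (\<lambda>x. (cmod (s x $ i))\<^sup>2)"
    and s_mean: "\<And>i. integral\<^sup>L M (\<lambda>x. s x $ i) = 0"
    and s_var: "\<And>i. integral\<^sup>L M (\<lambda>x. s x $ i * cnj (s x $ i)) = complex_of_real Es"
    and w: "circ_gaussian M w EJ"
    and n: "\<And>k. circ_gaussian M (\<lambda>x. n x $ k) N0"
  shows "diag_correlated M (all_entries s w n) (entry_variance Es EJ N0)"
proof -
  let ?Z = "all_entries s w n"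
  have moments: "integral\<^sup>L M (?Z p) = 0 \<and> integrable M (\<lambda>x. (cmod (?Z p x))\<^sup>2)
      \<and> integral\<^sup>L M (\<lambda>x. (cmod (?Z p x))\<^sup>2) = entry_variance Es EJ N0 p" for p
  proof (cases p)
    case (Inl q)
    then show ?thesis
      using s_square_int s_mean s_var circ_gaussian_moments[OF w \<open>0 \<le> EJ\<close>]
      by (cases q) (auto simp: entry_variance_def integral_mult_cnj_self)
  next
    case (Inr k)
    then show ?thesis
      using circ_gaussian_moments[OF n] \<open>0 < N0\<close> by (simp add: entry_variance_def)
  qed
  then have "entry_variance Es EJ N0 = (\<lambda>p. integral\<^sup>L M (\<lambda>x. (cmod (?Z p x))\<^sup>2))"
    by simp
  then show ?thesis
    using indep_vars_diag_correlated[OF indep] moments by simp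
qed

definition weighted_frob_sq :: "('p \<Rightarrow> real) \<Rightarrow> complex^'p^'m \<Rightarrow> real" where
  "weighted_frob_sq d A = (\<Sum>i\<in>UNIV. \<Sum>p\<in>UNIV. (cmod (A $ i $ p))\<^sup>2 * d p)"

lemma norm_vec_power2: "(norm (v :: complex^'m))\<^sup>2 = (\<Sum>i\<in>UNIV. (cmod (v $ i))\<^sup>2)"
  by (simp add: norm_vec_def L2_set_def sum_nonneg)

lemma integral_norm_mult_diag_correlated:
  fixes A :: "complex^'p^'m" and Z :: "'p \<Rightarrow> 'a \<Rightarrow> complex"
  assumes "diag_correlated M Z d"
  shows "integral\<^sup>L M (\<lambda>x. (norm (A *v (\<chi> p. Z p x)))\<^sup>2) = weighted_frob_sq d A"
proof -
  have integrable: "integrable M (\<lambda>x. Z p x * cnj (Z q x))"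
    and moment: "integral\<^sup>L M (\<lambda>x. Z p x * cnj (Z q x)) = (if p = q then complex_of_real (d p) else 0)"
    for p q
    using assms by (auto simp: diag_correlated_def)
  have expand: "complex_of_real ((norm (A *v (\<chi> p. Z p x)))\<^sup>2)
      = (\<Sum>i\<in>UNIV. \<Sum>p\<in>UNIV. \<Sum>q\<in>UNIV. (A$i$p * cnj (A$i$q)) * (Z p x * cnj (Z q x)))" for x
  proof -
    have "complex_of_real ((norm (A *v (\<chi> p. Z p x)))\<^sup>2)
        = (\<Sum>i\<in>UNIV. (A *v (\<chi> p. Z p x)) $ i * cnj ((A *v (\<chi> p. Z p x)) $ i))"
      by (simp only: norm_vec_power2 of_real_sum complex_norm_square)
    also have "\<dots> = (\<Sum>i\<in>UNIV. (\<Sum>p\<in>UNIV. A$i$p * Z p x) * (\<Sum>q\<in>UNIV. cnj (A$i$q) * cnj (Z q x)))"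
      by (simp add: matrix_vector_mult_def cnj_sum)
    finally show ?thesis
      by (simp add: sum_product mult_ac)
  qed
  have "complex_of_real (integral\<^sup>L M (\<lambda>x. (norm (A *v (\<chi> p. Z p x)))\<^sup>2))
      = (\<Sum>i\<in>UNIV. \<Sum>p\<in>UNIV. \<Sum>q\<in>UNIV. (A$i$p * cnj (A$i$q)) * integral\<^sup>L M (\<lambda>x. Z p x * cnj (Z q x)))"
    by (simp only: integral_complex_of_real[symmetric] expand)
      (simp add: integrable integral_sum integrable_sum)
  also have "\<dots> = (\<Sum>i\<in>UNIV. \<Sum>p\<in>UNIV. (A$i$p * cnj (A$i$p)) * complex_of_real (d p))"
    by (simp add: moment if_distrib[where f="\<lambda>z. _ * z"] sum.delta cong: if_cong)
  also have "\<dots> = complex_of_real (weighted_frob_sq d A)"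
    by (simp add: weighted_frob_sq_def complex_norm_square[symmetric] del: of_real_power)
  finally show ?thesis by (simp only: of_real_eq_iff)
qed

definition cdiag :: "('n \<Rightarrow> real) \<Rightarrow> complex^'n^'n" where
  "cdiag d = (\<chi> i k. if i = k then complex_of_real (d i) else 0)"

lemma matrix_mult_cdiag_cadj_nth:
  "(A ** cdiag d ** cadj G) $ i $ l = (\<Sum>p\<in>UNIV. A$i$p * complex_of_real (d p) * cnj (G$l$p))"
  by (simp add: matrix_matrix_mult_def cdiag_def cadj_def if_distrib[where f="\<lambda>z. _ * z"]
      sum.delta cong: if_cong)

lemma cmod_add_power2: "(cmod (a + b))\<^sup>2 = (cmod a)\<^sup>2 + (cmod b)\<^sup>2 + 2 * Re (a * cnj b)"
  unfolding cmod_power2 by (simp add: power2_eq_square algebra_simps)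

text \<open>Orthogonality principle: the normal equations \<open>A D G\<^sup>H = 0\<close> kill the cross term
  \<open>tr (A D (X G)\<^sup>H)\<close>.\<close>

lemma weighted_frob_sq_orthogonal:
  fixes A :: "complex^'p^'m" and G :: "complex^'p^'l" and X :: "complex^'l^'m"
  assumes d: "\<And>p. 0 \<le> d p" and normal: "A ** cdiag d ** cadj G = 0"
  shows "weighted_frob_sq d A \<le> weighted_frob_sq d (A + X ** G)"
proof -
  let ?B = "X ** G"
  have "(\<Sum>i\<in>UNIV. \<Sum>p\<in>UNIV. complex_of_real (d p) * (A$i$p * cnj (?B$i$p)))
      = (\<Sum>i\<in>UNIV. \<Sum>p\<in>UNIV. \<Sum>l\<in>UNIV. cnj (X$i$l) * (A$i$p * complex_of_real (d p) * cnj (G$l$p)))"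
    by (simp add: matrix_matrix_mult_def cnj_sum sum_distrib_left mult_ac)
  also have "\<dots> = (\<Sum>i\<in>UNIV. \<Sum>l\<in>UNIV. cnj (X$i$l) * (A ** cdiag d ** cadj G)$i$l)"
    unfolding matrix_mult_cdiag_cadj_nth sum_distrib_left by (intro sum.cong refl) (rule sum.swap)
  finally have cross: "(\<Sum>i\<in>UNIV. \<Sum>p\<in>UNIV. complex_of_real (d p) * (A$i$p * cnj (?B$i$p))) = 0"
    by (simp add: normal)
  have "weighted_frob_sq d (A + ?B)
      = weighted_frob_sq d A + weighted_frob_sq d ?B
        + 2 * Re (\<Sum>i\<in>UNIV. \<Sum>p\<in>UNIV. complex_of_real (d p) * (A$i$p * cnj (?B$i$p)))"
    by (simp add: weighted_frob_sq_def cmod_add_power2 algebra_simps sum.distrib sum_distrib_left Re_sum)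
  also have "\<dots> = weighted_frob_sq d A + weighted_frob_sq d ?B"
    by (simp add: cross)
  finally show ?thesis
    using d by (simp add: weighted_frob_sq_def sum_nonneg)
qed

lemma cadj_matrix_mult: "cadj (A ** B) = cadj (B :: complex^'n^'k) ** cadj (A :: complex^'k^'m)"
  by (simp add: cadj_def matrix_matrix_mult_def vec_eq_iff cnj_sum mult.commute)

lemma cadj_mat_1 [simp]: "cadj (mat 1 :: complex^'n^'n) = mat 1"
  by (simp add: cadj_def mat_def vec_eq_iff)

lemma cadj_cadj [simp]: "cadj (cadj A) = (A :: complex^'n^'m)"
  by (simp add: cadj_def vec_eq_iff)

lemma cadj_cdiag [simp]: "cadj (cdiag d) = cdiag d"
  by (simp add: cadj_def cdiag_def vec_eq_iff)

lemma cscale_1 [simp]: "cscale 1 A = A"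
  by (simp add: cscale_def vec_eq_iff)

lemma cscale_matrix_mult: "cscale c A ** B = cscale c (A ** B :: complex^'n^'m)"
  by (simp add: cscale_def matrix_matrix_mult_def vec_eq_iff sum_distrib_left mult_ac)

lemma couter_matrix_vector_mult: "couter b (A *v a) = couter b a ** cadj A"
  by (simp add: couter_def cadj_def matrix_vector_mult_def matrix_matrix_mult_def vec_eq_iff
      cnj_sum sum_distrib_left mult_ac)

lemma couter_cscale_hermitian:
  assumes "cadj A = A"
  shows "couter b (cscale (complex_of_real c) A *v a) = cscale (complex_of_real c) (couter b a ** A)"
proof -
  have "cadj (cscale (complex_of_real c) A) = cscale (complex_of_real c) (cadj A)"
    by (simp add: cadj_def cscale_def vec_eq_iff)
  then have "couter b (cscale (complex_of_real c) A *v a) = couter b a ** cscale (complex_of_real c) A"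
    by (simp add: couter_matrix_vector_mult assms)
  also have "\<dots> = cscale (complex_of_real c) (couter b a ** A)"
    by (simp add: cscale_def matrix_matrix_mult_def vec_eq_iff sum_distrib_left mult_ac)
  finally show ?thesis .
qed

lemma invertible_matrix_inv:
  fixes C :: "complex^'n^'n"
  assumes "invertible C"
  shows "C ** matrix_inv C = mat 1" "matrix_inv C ** C = mat 1"
  using someI_ex[OF assms[unfolded invertible_def]] by (simp_all add: matrix_inv_def)

lemma matrix_inv_hermitian:
  fixes C :: "complex^'n^'n"
  assumes inv: "invertible C" and herm: "cadj C = C"
  shows "cadj (matrix_inv C) = matrix_inv C"
proof -
  have left_inv: "cadj (matrix_inv C) ** C = mat 1"
    using cadj_matrix_mult[of C "matrix_inv C"] invertible_matrix_inv[OF inv] herm by simp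
  have "cadj (matrix_inv C) = cadj (matrix_inv C) ** (C ** matrix_inv C)"
    using invertible_matrix_inv[OF inv] by simp
  also have "\<dots> = matrix_inv C"
    by (simp add: matrix_mul_assoc left_inv)
  finally show ?thesis .
qed

definition source_matrix :: "complex^'u^'b \<Rightarrow> complex^'b \<Rightarrow> complex^(('u + unit) + 'b)^'b" where
  "source_matrix H j = (\<chi> i p. case p of Inl (Inl u) \<Rightarrow> H$i$u | Inl (Inr _) \<Rightarrow> j$i
                                      | Inr k \<Rightarrow> (if k = i then 1 else 0))"

definition jammer_matrix :: "complex^'b \<Rightarrow> complex^(('u::finite + unit) + 'b)^'b" where
  "jammer_matrix j = (\<chi> i p. case p of Inl (Inr _) \<Rightarrow> j$i | _ \<Rightarrow> 0)"

lemma sum_UNIV_Plus: "(\<Sum>p\<in>UNIV. f p) = (\<Sum>a\<in>UNIV. f (Inl a)) + (\<Sum>b\<in>UNIV. f (Inr b))"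
  for f :: "'a::finite + 'b::finite \<Rightarrow> 'c::comm_monoid_add"
  using sum.Plus[of "UNIV :: 'a set" "UNIV :: 'b set" f] by (simp add: comp_def)

lemma received_eq_source_matrix:
  fixes H :: "complex^'u^'b" and s :: "'a \<Rightarrow> complex^'u" and n :: "'a \<Rightarrow> complex^'b"
  shows "H *v s x + w x *s j + n x = source_matrix H j *v (\<chi> p. all_entries s w n p x)"
  by (simp add: vec_eq_iff matrix_vector_mult_def source_matrix_def sum_UNIV_Plus UNIV_unit
      if_distrib[where f="\<lambda>z. _ * z"] sum.delta mult.commute cong: if_cong)

lemma jamming_eq_jammer_matrix:
  fixes s :: "'a \<Rightarrow> complex^'u" and n :: "'a \<Rightarrow> complex^'b"
  shows "w x *s j = (jammer_matrix j :: complex^(('u + unit) + 'b)^'b) *v (\<chi> p. all_entries s w n p x)"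
  by (simp add: vec_eq_iff matrix_vector_mult_def jammer_matrix_def sum_UNIV_Plus UNIV_unit mult.commute)

lemma objective_eq_weighted_frob_sq:
  fixes H :: "complex^'u^'b" and s :: "'a \<Rightarrow> complex^'u" and n :: "'a \<Rightarrow> complex^'b"
  assumes "diag_correlated M (all_entries s w n) d"
  shows "objective M H j s w n \<beta> b a
    = weighted_frob_sq d (cscale \<beta> (couter b a) ** source_matrix H j - jammer_matrix j)"
  unfolding objective_def received_eq_source_matrix
  unfolding jamming_eq_jammer_matrix[where s = s and n = n]
  by (simp add: matrix_vector_mul_assoc matrix_vector_mult_diff_rdistrib[symmetric]
      integral_norm_mult_diag_correlated[OF assms])

lemma cov_y_factorization:
  fixes H :: "complex^'u^'b"
  shows "cov_y Es EJ N0 H j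
    = source_matrix H j ** cdiag (entry_variance Es EJ N0) ** cadj (source_matrix H j)"
proof -
  have "cov_y Es EJ N0 H j $ i $ l = (\<Sum>p\<in>UNIV. source_matrix H j $ i $ p
          * complex_of_real (entry_variance Es EJ N0 p) * cnj (source_matrix H j $ l $ p))" for i l
    by (simp add: sum_UNIV_Plus UNIV_unit source_matrix_def entry_variance_def cov_y_def cscale_def
        couter_def cadj_def matrix_matrix_mult_def mat_def sum_distrib_left mult_ac
        if_distrib[where f="\<lambda>z. _ * z"] if_distrib[where f="\<lambda>z. z * _"] sum.delta cong: if_cong)
  then show ?thesis
    by (simp add: vec_eq_iff matrix_mult_cdiag_cadj_nth)
qed

lemma jammer_cross_covariance:
  fixes H :: "complex^'u^'b"
  shows "(jammer_matrix j :: complex^(('u + unit) + 'b)^'b) ** cdiag (entry_variance Es EJ N0)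
           ** cadj (source_matrix H j) = cscale (complex_of_real EJ) (couter j j)"
  by (simp add: vec_eq_iff matrix_mult_cdiag_cadj_nth sum_UNIV_Plus UNIV_unit source_matrix_def
      jammer_matrix_def entry_variance_def cscale_def couter_def)

lemma cov_y_hermitian: "cadj (cov_y Es EJ N0 H j) = cov_y Es EJ N0 H j"
  by (simp add: cov_y_factorization cadj_matrix_mult matrix_mul_assoc)

lemma hermitian_form_factorization:
  fixes G :: "complex^'p^'n" and x :: "complex^'n"
  shows "(\<Sum>i\<in>UNIV. cnj (x$i) * ((G ** cdiag d ** cadj G) *v x) $ i)
       = complex_of_real (\<Sum>p\<in>UNIV. d p * (cmod ((cadj G *v x) $ p))\<^sup>2)"
proof -
  have "(\<Sum>i\<in>UNIV. cnj (x$i) * ((G ** cdiag d ** cadj G) *v x) $ i)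
      = (\<Sum>i\<in>UNIV. \<Sum>l\<in>UNIV. \<Sum>p\<in>UNIV.
           complex_of_real (d p) * ((cnj (x$i) * G$i$p) * (cnj (G$l$p) * x$l)))"
    by (simp add: matrix_vector_mult_def matrix_mult_cdiag_cadj_nth sum_distrib_left
        sum_distrib_right mult_ac)
  also have "\<dots> = (\<Sum>p\<in>UNIV. \<Sum>i\<in>UNIV. \<Sum>l\<in>UNIV.
           complex_of_real (d p) * ((cnj (x$i) * G$i$p) * (cnj (G$l$p) * x$l)))"
    by (subst sum.swap) (intro sum.cong refl sum.swap)
  also have "\<dots> = (\<Sum>p\<in>UNIV. complex_of_real (d p)
           * ((cadj G *v x) $ p * cnj ((cadj G *v x) $ p)))"
    by (simp add: cadj_def matrix_vector_mult_def cnj_sum sum_product sum_distrib_left mult_ac)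
  also have "\<dots> = complex_of_real (\<Sum>p\<in>UNIV. d p * (cmod ((cadj G *v x) $ p))\<^sup>2)"
    by (simp add: complex_norm_square del: of_real_power)
  finally show ?thesis .
qed

lemma cov_y_invertible:
  fixes H :: "complex^'u^'b"
  assumes "0 \<le> Es" "0 \<le> EJ" "0 < N0"
  shows "invertible (cov_y Es EJ N0 H j)"
proof -
  have "x = 0" if "cov_y Es EJ N0 H j *v x = 0" for x
  proof -
    let ?v = "cadj (source_matrix H j) *v x"
    have "complex_of_real (\<Sum>p\<in>UNIV. entry_variance Es EJ N0 p * (cmod (?v $ p))\<^sup>2)
        = (\<Sum>i\<in>UNIV. cnj (x$i) * (cov_y Es EJ N0 H j *v x) $ i)"
      by (simp only: hermitian_form_factorization cov_y_factorization)
    also have "\<dots> = 0"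
      using that by simp
    finally have "(\<Sum>p\<in>UNIV. entry_variance Es EJ N0 p * (cmod (?v $ p))\<^sup>2) = 0"
      by (simp only: of_real_eq_0_iff)
    moreover have "0 \<le> entry_variance Es EJ N0 p * (cmod (?v $ p))\<^sup>2" for p
      using assms by (simp add: entry_variance_nonneg)
    ultimately have vanish: "entry_variance Es EJ N0 p = 0 \<or> ?v $ p = 0" for p
      by (simp add: sum_nonneg_eq_0_iff)
    have "?v $ Inr k = 0" for k
      using vanish[of "Inr k"] \<open>0 < N0\<close> by (simp add: entry_variance_def)
    moreover have "?v $ Inr k = x $ k" for k
      by (simp add: cadj_def source_matrix_def matrix_vector_mult_def
          if_distrib[where f=cnj] if_distrib[where f="\<lambda>z. z * _"] sum.delta cong: if_cong)
    ultimately show "x = 0"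
      by (simp add: vec_eq_iff)
  qed
  then show ?thesis
    by (simp add: invertible_left_inverse matrix_left_invertible_ker)
qed

lemma matrix_diff_rdistrib: "(A - B) ** C = A ** C - B ** (C :: 'a::ring_1^'n^'k)"
  by (simp add: matrix_matrix_mult_def vec_eq_iff algebra_simps sum_subtractf)

lemma weighted_frob_sq_le_of_normal_equation:
  fixes H :: "complex^'u^'b" and F0 F :: "complex^'b^'b"
  assumes "0 \<le> Es" "0 \<le> EJ" "0 \<le> N0"
    and normal: "F0 ** cov_y Es EJ N0 H j = cscale (complex_of_real EJ) (couter j j)"
  shows "weighted_frob_sq (entry_variance Es EJ N0) (F0 ** source_matrix H j - jammer_matrix j)
       \<le> weighted_frob_sq (entry_variance Es EJ N0) (F ** source_matrix H j - jammer_matrix j)"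
proof -
  let ?G = "source_matrix H j" and ?K = "jammer_matrix j :: complex^(('u + unit) + 'b)^'b"
    and ?D = "cdiag (entry_variance Es EJ N0)"
  have "(F0 ** ?G - ?K) ** ?D ** cadj ?G = F0 ** cov_y Es EJ N0 H j - cscale (complex_of_real EJ) (couter j j)"
    by (simp add: matrix_diff_rdistrib cov_y_factorization jammer_cross_covariance matrix_mul_assoc)
  then have "(F0 ** ?G - ?K) ** ?D ** cadj ?G = 0"
    by (simp add: normal)
  then have "weighted_frob_sq (entry_variance Es EJ N0) (F0 ** ?G - ?K)
      \<le> weighted_frob_sq (entry_variance Es EJ N0) ((F0 ** ?G - ?K) + (F - F0) ** ?G)"
    using assms by (intro weighted_frob_sq_orthogonal entry_variance_nonneg)
  also have "(F0 ** ?G - ?K) + (F - F0) ** ?G = F ** ?G - ?K"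
    by (simp add: matrix_diff_rdistrib)
  finally show ?thesis .
qed

theorem corollary1:
  fixes M :: "'a measure"
    and H :: "complex^'u^'b" and j :: "complex^'b"
    and s :: "'a \<Rightarrow> complex^'u" and w :: "'a \<Rightarrow> complex" and n :: "'a \<Rightarrow> complex^'b"
    and Es EJ N0 :: real
  assumes "prob_space M"
    and "Es \<ge> 0" and "EJ \<ge> 0" and "N0 > 0"
    and "s \<in> borel_measurable M" and "w \<in> borel_measurable M" and "n \<in> borel_measurable M"
    and "prob_space.indep_vars M (\<lambda>_. borel) (all_entries s w n) UNIV"
    and "\<And>i. integrable M (\<lambda>x. (cmod (s x $ i))\<^sup>2)"
    and "\<And>i. integral\<^sup>L M (\<lambda>x. s x $ i) = 0"
    and "\<And>i k. integral\<^sup>L M (\<lambda>x. s x $ i * cnj (s x $ k)) = (if i = k then complex_of_real Es else 0)"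
    and "circ_gaussian M w EJ"
    and "\<And>k. circ_gaussian M (\<lambda>x. n x $ k) N0"
  shows "(\<forall>\<beta> b a. objective M H j s w n 1 j (cscale (complex_of_real EJ) (matrix_inv (cov_y Es EJ N0 H j)) *v j)
                 \<le> objective M H j s w n \<beta> b a)
       \<and> mat 1 - cscale 1 (couter j (cscale (complex_of_real EJ) (matrix_inv (cov_y Es EJ N0 H j)) *v j))
         = mat 1 - cscale (complex_of_real EJ) (couter j j ** matrix_inv (cov_y Es EJ N0 H j))"
proof -
  interpret prob_space M by fact
  let ?C = "cov_y Es EJ N0 H j"
  have inv: "invertible ?C"
    using assms(2-4) by (intro cov_y_invertible) auto
  have rank_one: "couter j (cscale (complex_of_real EJ) (matrix_inv ?C) *v j)
      = cscale (complex_of_real EJ) (couter j j ** matrix_inv ?C)"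
    by (intro couter_cscale_hermitian matrix_inv_hermitian inv cov_y_hermitian)
  have normal: "cscale (complex_of_real EJ) (couter j j ** matrix_inv ?C) ** ?C
      = cscale (complex_of_real EJ) (couter j j)"
    by (simp add: cscale_matrix_mult matrix_mul_assoc[symmetric] invertible_matrix_inv[OF inv])
  have corr: "diag_correlated M (all_entries s w n) (entry_variance Es EJ N0)"
    using assms by (intro all_entries_diag_correlated) auto
  show ?thesis
    using weighted_frob_sq_le_of_normal_equation[OF assms(2,3) _ normal] assms(4)
    by (simp add: objective_eq_weighted_frob_sq[OF corr] rank_one)
qed

end
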